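(* For all Hessenberg spaces $H$ and $H'$ of $n\times n$ matrices, $X_{H+H'}=X_H\cup X_{H'}$, where for a Hessenberg space $K$ we set $X_K=\{[g]\in GL_n(\mathbb{C})/B: g^{-1}E_{1n}g\in K\}$.
   Context: $B$ is the group of invertible upper-triangular $n\times n$ complex matrices; $[g]$ denotes the flag whose $k$-dimensional subspace is spanned by the first $k$ columns of $g$. $E_{kl}$ is the matrix unit with $1$ in entry $(k,l)$. A Hessenberg space is a subspace of the form $H_h=\operatorname{span}\{E_{kl}: k\le h(l)\}$ for a nondecreasing function $h:\{1,\dots,n\}\to\{0,1,\dots,n\}$; $H+H'$ is the subspace spanned by $H\cup H'$ (again a Hessenberg space, spanned by the matrix units lying in $H$ or $H'$). *)

theory Defs
  imports "Jordan_Normal_Form.Matrix"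
begin

text \<open>Indices are 0-based: rows/columns 0..n-1. A Hessenberg function is
  h : {0..n-1} -> {0..n} nondecreasing; entry (k,l) is allowed iff k < h l
  (this is the paper's k' <= h'(l') with k' = k+1, l' = l+1).\<close>

definition hessenberg_fun :: "nat \<Rightarrow> (nat \<Rightarrow> nat) \<Rightarrow> bool" where
  "hessenberg_fun n h \<longleftrightarrow> (\<forall>l<n. h l \<le> n) \<and> (\<forall>i j. i \<le> j \<and> j < n \<longrightarrow> h i \<le> h j)"

definition hess_space :: "nat \<Rightarrow> (nat \<Rightarrow> nat) \<Rightarrow> complex mat set" where
  "hess_space n h = {A \<in> carrier_mat n n. \<forall>k<n. \<forall>l<n. \<not> k < h l \<longrightarrow> A $$ (k,l) = 0}"

definition space_sum :: "complex mat set \<Rightarrow> complex mat set \<Rightarrow> complex mat set" where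
  "space_sum H H' = {A + B | A B. A \<in> H \<and> B \<in> H'}"

definition E1n :: "nat \<Rightarrow> complex mat" where
  "E1n n = mat n n (\<lambda>(i,j). if i = 0 \<and> j = n - 1 then 1 else 0)"

text \<open>The flag [g]: its k-th member is the span of the first k columns of g.\<close>
definition flag_of :: "nat \<Rightarrow> complex mat \<Rightarrow> nat \<Rightarrow> complex vec set" where
  "flag_of n g k = {g *\<^sub>v x | x. x \<in> carrier_vec n \<and> (\<forall>i. k \<le> i \<and> i < n \<longrightarrow> x $ i = 0)}"

definition X_space :: "nat \<Rightarrow> complex mat set \<Rightarrow> (nat \<Rightarrow> complex vec set) set" where
  "X_space n K = {flag_of n g | g. g \<in> carrier_mat n n \<and> invertible_mat g \<and>
     (\<exists>gi \<in> carrier_mat n n. gi * g = 1\<^sub>m n \<and> gi * E1n n * g \<in> K)}"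

end

theory Submission
  imports Defs
begin

text \<open>Conjugating E_{1n} by g gives a matrix of rank one, whose k-th row is the k-th entry of
  the first column of g^{-1} times the last row of g. The support of a rank-one matrix is a
  rectangle of rows and columns; if it met the forbidden region of both H and H', then its
  lowest row and leftmost column would meet in an entry forbidden for H and for H' alike,
  because Hessenberg functions are nondecreasing. Such an entry vanishes on H + H', so a
  rank-one matrix in H + H' lies in H or in H'.\<close>

lemma hessenberg_fun_mono:
  assumes "hessenberg_fun n h" "i \<le> j" "j < n"
  shows "h i \<le> h j"
  using assms unfolding hessenberg_fun_def by blast

lemma hess_space_subset_space_sum_left: "hess_space n h \<subseteq> space_sum (hess_space n h) (hess_space n h')"
proof
  fix A assume A: "A \<in> hess_space n h"
  have "0\<^sub>m n n \<in> hess_space n h'" by (simp add: hess_space_def)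
  moreover have "A = A + 0\<^sub>m n n" using A by (simp add: hess_space_def)
  ultimately show "A \<in> space_sum (hess_space n h) (hess_space n h')"
    unfolding space_sum_def using A by blast
qed

lemma hess_space_subset_space_sum_right: "hess_space n h' \<subseteq> space_sum (hess_space n h) (hess_space n h')"
proof
  fix A assume A: "A \<in> hess_space n h'"
  have "0\<^sub>m n n \<in> hess_space n h" by (simp add: hess_space_def)
  moreover have "A = 0\<^sub>m n n + A" using A by (simp add: hess_space_def)
  ultimately show "A \<in> space_sum (hess_space n h) (hess_space n h')"
    unfolding space_sum_def using A by blast
qed

lemma space_sum_hess_space_entry_eq_0:
  assumes "A \<in> space_sum (hess_space n h) (hess_space n h')" "k < n" "l < n"
    and "\<not> k < h l" "\<not> k < h' l"
  shows "A $$ (k,l) = 0"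
proof -
  obtain B C where BC: "A = B + C" "B \<in> hess_space n h" "C \<in> hess_space n h'"
    using assms(1) unfolding space_sum_def by blast
  have "B $$ (k,l) = 0" "C $$ (k,l) = 0"
    using BC(2,3) assms(2-) unfolding hess_space_def by blast+
  moreover have "C \<in> carrier_mat n n" using BC(3) unfolding hess_space_def by blast
  ultimately show ?thesis using BC(1) assms(2,3) by simp
qed

lemma rank_one_in_space_sum_hess_space:
  assumes h: "hessenberg_fun n h" and h': "hessenberg_fun n h'"
    and M: "M \<in> carrier_mat n n" "M \<in> space_sum (hess_space n h) (hess_space n h')"
    and rank_one: "\<And>k l. k < n \<Longrightarrow> l < n \<Longrightarrow> M $$ (k,l) = u k * v l"
  shows "M \<in> hess_space n h \<or> M \<in> hess_space n h'"
proof (rule ccontr)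
  assume "\<not> ?thesis"
  then obtain k1 l1 k2 l2 where
    out1: "k1 < n" "l1 < n" "\<not> k1 < h l1" "u k1 \<noteq> 0" "v l1 \<noteq> 0" and
    out2: "k2 < n" "l2 < n" "\<not> k2 < h' l2" "u k2 \<noteq> 0" "v l2 \<noteq> 0"
    using M(1) rank_one unfolding hess_space_def by auto
  define k where "k = max k1 k2"
  define l where "l = min l1 l2"
  have kl: "k < n" "l < n" using out1 out2 by (auto simp: k_def l_def)
  have "h l \<le> h l1" "h' l \<le> h' l2"
    using hessenberg_fun_mono[OF h] hessenberg_fun_mono[OF h'] out1 out2 by (auto simp: l_def)
  then have "\<not> k < h l" "\<not> k < h' l" using out1 out2 by (auto simp: k_def)
  then have "M $$ (k,l) = 0" using space_sum_hess_space_entry_eq_0[OF M(2) kl] by blast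
  moreover have "u k \<noteq> 0" "v l \<noteq> 0" using out1 out2 by (auto simp: k_def l_def max_def min_def)
  ultimately show False using rank_one[OF kl] by (metis mult_eq_0_iff)
qed

lemma E1n_carrier_mat: "E1n n \<in> carrier_mat n n"
  by (simp add: E1n_def)

lemma conj_E1n_index:
  assumes gi: "gi \<in> carrier_mat n n" and g: "g \<in> carrier_mat n n" and "k < n" "l < n"
  shows "(gi * E1n n * g) $$ (k,l) = gi $$ (k,0) * g $$ (n-1,l)"
proof -
  have row: "(gi * E1n n) $$ (k,j) = (if j = n - 1 then gi $$ (k,0) else 0)" if "j < n" for j
    using gi E1n_carrier_mat \<open>k < n\<close> that
    by (simp add: E1n_def scalar_prod_def if_distrib[of "\<lambda>x. _ * x"] sum.delta cong: if_cong)
  have gE: "gi * E1n n \<in> carrier_mat n n" using gi E1n_carrier_mat by (rule mult_carrier_mat)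
  have "(gi * E1n n * g) $$ (k,l) = row (gi * E1n n) k \<bullet> col g l"
    using gE g assms(3,4) by (subst index_mult_mat(1)) auto
  also have "\<dots> = (\<Sum>j<n. (gi * E1n n) $$ (k,j) * g $$ (j,l))"
    unfolding scalar_prod_def using carrier_matD[OF gE] carrier_matD[OF g] assms(3,4)
    by (intro sum.cong) (auto simp: atLeast0LessThan)
  also have "\<dots> = (\<Sum>j<n. if j = n - 1 then gi $$ (k,0) * g $$ (j,l) else 0)"
    by (rule sum.cong) (auto simp: row)
  also have "\<dots> = gi $$ (k,0) * g $$ (n-1,l)"
    using \<open>k < n\<close> by (simp add: sum.delta)
  finally show ?thesis .
qed

lemma X_space_mono: "K \<subseteq> K' \<Longrightarrow> X_space n K \<subseteq> X_space n K'"
  unfolding X_space_def by blast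

lemma X_space_space_sum_hess_space_subset:
  assumes "hessenberg_fun n h" "hessenberg_fun n h'"
  shows "X_space n (space_sum (hess_space n h) (hess_space n h'))
           \<subseteq> X_space n (hess_space n h) \<union> X_space n (hess_space n h')"
proof
  fix F assume "F \<in> X_space n (space_sum (hess_space n h) (hess_space n h'))"
  then obtain g gi where g: "F = flag_of n g" "g \<in> carrier_mat n n" "invertible_mat g"
    "gi \<in> carrier_mat n n" "gi * g = 1\<^sub>m n"
    and conj: "gi * E1n n * g \<in> space_sum (hess_space n h) (hess_space n h')"
    unfolding X_space_def by blast
  have "gi * E1n n * g \<in> carrier_mat n n"
    using g E1n_carrier_mat by (meson mult_carrier_mat)
  then have "gi * E1n n * g \<in> hess_space n h \<or> gi * E1n n * g \<in> hess_space n h'"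
    by (rule rank_one_in_space_sum_hess_space[OF assms _ conj conj_E1n_index[OF g(4,2)]])
  then show "F \<in> X_space n (hess_space n h) \<union> X_space n (hess_space n h')"
    unfolding X_space_def using g by blast
qed

theorem mainTheorem6:
  fixes n :: nat and h h' :: "nat \<Rightarrow> nat"
  assumes "hessenberg_fun n h" and "hessenberg_fun n h'"
  shows "X_space n (space_sum (hess_space n h) (hess_space n h'))
           = X_space n (hess_space n h) \<union> X_space n (hess_space n h')"
  using X_space_space_sum_hess_space_subset[OF assms]
    X_space_mono[OF hess_space_subset_space_sum_left]
    X_space_mono[OF hess_space_subset_space_sum_right]
  by blast

end
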